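(* Let $I,J\subset\mathbb{R}$ be open intervals and $f\colon I\to\mathbb{R}$, $g\colon J\to\mathbb{R}$ smooth functions. Let $\alpha(s)=(s,f(s),0)$ (a curve in the plane $\{z=0\}$) and $\beta(t)=(t,0,g(t))$ (a curve in the plane $\{y=0\}$), and consider the translation surface $$x(s,t)=\alpha(s)\ast\beta(t)=(s+t,\,f(s),\,g(t)),\qquad (s,t)\in I\times J,$$ in $\mathrm{Sol}_3$. Then this surface is minimal if and only if one of the following holds: (i) $f$ is constant, $f\equiv y_0$ (the surface is a piece of the plane $y=y_0$); (ii) $g$ is constant, $g\equiv z_0$ (the surface is a piece of the plane $z=z_0$); (iii) there are constants $a\neq 0$ and $b$ with $f(s)=as+b$ for all $s\in I$, and $g(t)=\tfrac12\zeta(t)+m$ where $e^{4m}=a^2$ and $\zeta\colon J\to\mathbb{R}$ is a smooth function satisfying $(\zeta')^2\cosh\zeta=c^2$ on $J$ for some constant $c>0$; equivalently, $I_0(\zeta(t))=\pm ct+d$ for some $d\in\mathbb{R}$, where $I_0(u)=\int_0^u\sqrt{\cosh\tau}\,d\tau$ (so $\zeta=I_0^{-1}(\pm ct+d)$). Moreover, the vertical planes $x=x_0$ are minimal translation surfaces of type I (obtained with $\alpha(s)=(x_0',s,0)$, $\beta(t)=(x_0'',0,t)$, $x_0'+x_0''=x_0$).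
   Context: $\mathrm{Sol}_3$ is $\mathbb{R}^3$ with coordinates $(x,y,z)$, the Riemannian metric $e^{2z}dx^2+e^{-2z}dy^2+dz^2$, and the Lie group operation $(x,y,z)\ast(x',y',z')=(x+e^{-z}x',\,y+e^{z}y',\,z+z')$, for which the metric is left-invariant. A translation surface $M(\alpha,\beta)$ is a surface parametrized by $x(s,t)=\alpha(s)\ast\beta(t)$ where $\alpha,\beta$ are curves lying in coordinate planes of $\mathbb{R}^3$; it is of type I if $\alpha\subset\{z=0\}$ and $\beta\subset\{y=0\}$. A surface is minimal if its mean curvature (half the trace of the Weingarten map, computed with the Levi-Civita connection of the metric above) vanishes identically. *)

theory Defs
  imports "HOL-Analysis.Analysis"
begin

(* Points of Sol_3 are vectors p :: real^3 with coordinates x = p$1, y = p$2, z = p$3. *)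

definition sol_pt :: "real \<Rightarrow> real \<Rightarrow> real \<Rightarrow> real^3" where
  "sol_pt a b c = vector [a, b, c]"

definition sol_mult :: "real^3 \<Rightarrow> real^3 \<Rightarrow> real^3" where
  "sol_mult p q = sol_pt (p$1 + exp (- (p$3)) * q$1) (p$2 + exp (p$3) * q$2) (p$3 + q$3)"

definition sol_g :: "real^3 \<Rightarrow> 3 \<Rightarrow> 3 \<Rightarrow> real" where
  "sol_g p i j = (if i = j then (if i = 1 then exp (2 * p$3) else if i = 2 then exp (-2 * p$3) else 1) else 0)"

definition sol_inner :: "real^3 \<Rightarrow> real^3 \<Rightarrow> real^3 \<Rightarrow> real" where
  "sol_inner p U V = (\<Sum>i\<in>UNIV. \<Sum>j\<in>UNIV. sol_g p i j * U$i * V$j)"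

definition sol_ginv :: "real^3 \<Rightarrow> real^3^3" where
  "sol_ginv p = matrix_inv (\<chi> i j. sol_g p i j)"

definition coord_pd :: "3 \<Rightarrow> (real^3 \<Rightarrow> real) \<Rightarrow> real^3 \<Rightarrow> real" where
  "coord_pd i \<phi> p = deriv (\<lambda>h. \<phi> (p + h *\<^sub>R axis i 1)) 0"

definition sol_christoffel :: "real^3 \<Rightarrow> 3 \<Rightarrow> 3 \<Rightarrow> 3 \<Rightarrow> real" where
  "sol_christoffel p k i j = (1/2) * (\<Sum>l\<in>UNIV. sol_ginv p $ k $ l *
      (coord_pd i (\<lambda>q. sol_g q j l) p + coord_pd j (\<lambda>q. sol_g q i l) p - coord_pd l (\<lambda>q. sol_g q i j) p))"

(* Levi-Civita covariant derivative along a curve/surface: given the ordinary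
   derivative D of the vector field V (in coordinates) along the direction U at p,
   (nabla_U V)^k = D^k + Gamma^k_ij U^i V^j *)
definition sol_cov :: "real^3 \<Rightarrow> real^3 \<Rightarrow> real^3 \<Rightarrow> real^3 \<Rightarrow> real^3" where
  "sol_cov p D U V = D + (\<chi> k. \<Sum>i\<in>UNIV. \<Sum>j\<in>UNIV. sol_christoffel p k i j * U$i * V$j)"

definition surf_s :: "(real \<Rightarrow> real \<Rightarrow> real^3) \<Rightarrow> real \<Rightarrow> real \<Rightarrow> real^3" where
  "surf_s X s t = vector_derivative (\<lambda>s'. X s' t) (at s)"

definition surf_t :: "(real \<Rightarrow> real \<Rightarrow> real^3) \<Rightarrow> real \<Rightarrow> real \<Rightarrow> real^3" where
  "surf_t X s t = vector_derivative (\<lambda>t'. X s t') (at t)"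

definition surf_regular :: "(real \<Rightarrow> real \<Rightarrow> real^3) \<Rightarrow> real \<Rightarrow> real \<Rightarrow> bool" where
  "surf_regular X s t \<longleftrightarrow>
     (\<forall>a b. a *\<^sub>R surf_s X s t + b *\<^sub>R surf_t X s t = 0 \<longrightarrow> a = 0 \<and> b = 0)"

definition sol_unit_normal :: "(real \<Rightarrow> real \<Rightarrow> real^3) \<Rightarrow> real \<Rightarrow> real \<Rightarrow> real^3 \<Rightarrow> bool" where
  "sol_unit_normal X s t N \<longleftrightarrow>
     sol_inner (X s t) N (surf_s X s t) = 0 \<and> sol_inner (X s t) N (surf_t X s t) = 0
     \<and> sol_inner (X s t) N N = 1"

(* Mean curvature (half the trace of the Weingarten map) w.r.t. the unit normal N:
   H = (E n - 2 F m + G l) / (2 (E G - F^2)), where E,F,G is the first fundamental form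
   and l = <nabla_{X_s} X_s, N>, m = <nabla_{X_s} X_t, N>, n = <nabla_{X_t} X_t, N>. *)
definition sol_mean_curv :: "(real \<Rightarrow> real \<Rightarrow> real^3) \<Rightarrow> real^3 \<Rightarrow> real \<Rightarrow> real \<Rightarrow> real" where
  "sol_mean_curv X N s t =
     (let p = X s t; Xs = surf_s X s t; Xt = surf_t X s t;
          Xss = vector_derivative (\<lambda>s'. surf_s X s' t) (at s);
          Xst = vector_derivative (\<lambda>t'. surf_s X s t') (at t);
          Xtt = vector_derivative (\<lambda>t'. surf_t X s t') (at t);
          E = sol_inner p Xs Xs; F = sol_inner p Xs Xt; G = sol_inner p Xt Xt;
          l = sol_inner p (sol_cov p Xss Xs Xs) N;
          m = sol_inner p (sol_cov p Xst Xs Xt) N;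
          n = sol_inner p (sol_cov p Xtt Xt Xt) N
      in (E * n - 2 * F * m + G * l) / (2 * (E * G - F^2)))"

definition sol_minimal :: "(real \<Rightarrow> real \<Rightarrow> real^3) \<Rightarrow> (real \<times> real) set \<Rightarrow> bool" where
  "sol_minimal X U \<longleftrightarrow>
     (\<forall>(s,t)\<in>U. surf_regular X s t \<longrightarrow>
        (\<forall>N. sol_unit_normal X s t N \<longrightarrow> sol_mean_curv X N s t = 0))"

definition translation_surface :: "(real \<Rightarrow> real^3) \<Rightarrow> (real \<Rightarrow> real^3) \<Rightarrow> real \<Rightarrow> real \<Rightarrow> real^3" where
  "translation_surface \<alpha> \<beta> s t = sol_mult (\<alpha> s) (\<beta> t)"

definition smooth_on :: "real set \<Rightarrow> (real \<Rightarrow> real) \<Rightarrow> bool" where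
  "smooth_on S f \<longleftrightarrow> (\<forall>n. (deriv ^^ n) f differentiable_on S)"

(* I_0(u) = int_0^u sqrt(cosh tau) dtau  (oriented integral) *)
definition I0 :: "real \<Rightarrow> real" where
  "I0 u = (LBINT \<tau>=0..u. sqrt (cosh \<tau>))"

end

theory Submission
  imports Defs
begin

(* Proof outline.
   1. Coordinates: in Sol_3 the metric is diagonal, so its inverse and its Christoffel symbols
      are explicit; the only non-zero symbols are G^1_13 = 1, G^2_23 = -1, G^3_11 = -e^{2z},
      G^3_22 = e^{-2z}.  At a regular point the numerator of H, paired with the two
      orthogonality relations of a normal, is a multiple of the polynomial
         P = f' g'' (e^{4g} + f'^2) + f'' g' (e^{4g} + e^{2g} g'^2) + f' g'^2 (e^{4g} - f'^2),
      so the surface is minimal iff P vanishes on I x J (minimality_lhs, typeI_minimal_iff).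
   3. Solving P = 0: if f'' is not identically zero one separates variables and derives an
      over-determined ODE system for g which has only constant solutions (no_typeB_solution);
      if f'' = 0 then f is affine and P = 0 becomes, for zeta = 2g - 2m with e^{4m} = f'^2,
      the ODE 2 zeta'' cosh zeta + zeta'^2 sinh zeta = 0, i.e. zeta'^2 cosh zeta is constant.
   4. zeta'^2 cosh zeta = c^2 is integrated with I0, and the vertical planes are checked directly. *)

section \<open>Coordinate description of the geometry of Sol_3\<close>

lemma sol_pt_nth [simp]: "sol_pt a b c $ 1 = a" "sol_pt a b c $ 2 = b" "sol_pt a b c $ 3 = c"
  by (simp_all add: sol_pt_def)

lemma vec3_eq_iff: "(x::real^3) = y \<longleftrightarrow> x$1 = y$1 \<and> x$2 = y$2 \<and> x$3 = y$3"
  by (simp add: vec_eq_iff forall_3)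

lemma sol_inner_eq: "sol_inner p U V = exp (2*p$3)*U$1*V$1 + exp(-2*p$3)*U$2*V$2 + U$3*V$3"
  by (simp add: sol_inner_def sol_g_def sum_3)

lemma matrix_inv_eqI:
  fixes A B :: "real^'n^'n"
  assumes "A ** B = mat 1" "B ** A = mat 1"
  shows "matrix_inv A = B"
proof -
  let ?C = "matrix_inv A"
  have C: "A ** ?C = mat 1 \<and> ?C ** A = mat 1"
    unfolding matrix_inv_def using someI_ex[of "\<lambda>A'. A ** A' = mat 1 \<and> A' ** A = mat 1"] assms
    by blast
  have "?C = ?C ** (A ** B)" using assms by (simp add: matrix_mul_rid)
  also have "\<dots> = (?C ** A) ** B" by (simp add: matrix_mul_assoc)
  also have "\<dots> = B" using C by (simp add: matrix_mul_lid)
  finally show ?thesis .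
qed

lemma sol_ginv_eq:
  "sol_ginv p = (\<chi> i j. if i = j then (if i = 1 then exp (-2*p$3) else if i = 2 then exp (2*p$3) else 1) else 0)"
  unfolding sol_ginv_def
  by (rule matrix_inv_eqI)
     (simp_all add: vec_eq_iff forall_3 matrix_matrix_mult_def mat_def sum_3 sol_g_def
        exp_minus_inverse mult_exp_exp)

lemma deriv_exp_lin: "deriv (\<lambda>h. exp (k * (a + h * b))) 0 = k * b * exp (k * (a::real))"
proof -
  have "((\<lambda>h. exp (k * (a + h * b))) has_real_derivative exp (k * (a + 0 * b)) * (k * (0 + 1 * b))) (at 0)"
    by (intro derivative_eq_intros) auto
  then show ?thesis by (intro DERIV_imp_deriv) (simp add: mult_ac)
qed

lemma coord_pd_g: "coord_pd i (\<lambda>q. sol_g q j l) p =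
   (if j = l \<and> i = 3 then (if j = 1 then 2 * exp (2*p$3) else if j = 2 then -2 * exp (-2*p$3) else 0) else 0)"
proof -
  define c :: real where "c = (if i = 3 then 1 else 0)"
  have e: "(p + h *\<^sub>R axis i 1) $ 3 = p$3 + h * c" for h
    by (auto simp: axis_def c_def)
  show ?thesis
    unfolding coord_pd_def sol_g_def e
    using deriv_exp_lin[of 2 "p$3" c] deriv_exp_lin[of "-2" "p$3" c]
    by (cases "j = l"; cases "j = 1"; cases "j = 2"; simp add: c_def)
qed

lemma sol_christoffel_eq: "sol_christoffel p k i j =
    (if k = 1 \<and> ((i = 1 \<and> j = 3) \<or> (i = 3 \<and> j = 1)) then 1
     else if k = 2 \<and> ((i = 2 \<and> j = 3) \<or> (i = 3 \<and> j = 2)) then -1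
     else if k = 3 \<and> i = 1 \<and> j = 1 then - exp (2*p$3)
     else if k = 3 \<and> i = 2 \<and> j = 2 then exp (-2*p$3) else 0)"
proof -
  have "\<forall>k i j. sol_christoffel p k i j =
    (if k = 1 \<and> ((i = 1 \<and> j = 3) \<or> (i = 3 \<and> j = 1)) then 1
     else if k = 2 \<and> ((i = 2 \<and> j = 3) \<or> (i = 3 \<and> j = 2)) then -1
     else if k = 3 \<and> i = 1 \<and> j = 1 then - exp (2*p$3)
     else if k = 3 \<and> i = 2 \<and> j = 2 then exp (-2*p$3) else 0)"
    unfolding forall_3 sol_christoffel_def sol_ginv_eq coord_pd_g sum_3
    by (simp add: exp_minus_inverse mult_exp_exp)
  then show ?thesis by blast
qed

lemma sol_cov_eq: "sol_cov p D U V = D + sol_pt (U$1*V$3 + U$3*V$1) (-(U$2*V$3 + U$3*V$2))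
    (- exp (2*p$3) * U$1*V$1 + exp (-2*p$3)*U$2*V$2)"
  unfolding sol_cov_def sol_christoffel_eq
  by (simp add: vec3_eq_iff sum_3 algebra_simps)

lemma has_vector_derivative_sol_pt:
  assumes "(a has_real_derivative a') (at x)" "(b has_real_derivative b') (at x)"
    "(c has_real_derivative c') (at x)"
  shows "((\<lambda>x. sol_pt (a x) (b x) (c x)) has_vector_derivative sol_pt a' b' c') (at x)"
proof -
  have decomp: "sol_pt a b c = a *\<^sub>R axis 1 1 + b *\<^sub>R axis 2 1 + c *\<^sub>R axis 3 1" for a b c
    by (simp add: vec3_eq_iff axis_def)
  have "((\<lambda>x. a x *\<^sub>R axis 1 1 + b x *\<^sub>R axis 2 1 + c x *\<^sub>R (axis 3 1 :: real^3)) has_vector_derivative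
     (a x *\<^sub>R 0 + a' *\<^sub>R axis 1 1 + (b x *\<^sub>R 0 + b' *\<^sub>R axis 2 1) + (c x *\<^sub>R 0 + c' *\<^sub>R axis 3 1))) (at x)"
    by (intro derivative_intros assms)
  then show ?thesis by (simp add: decomp)
qed

lemma smooth_on_DERIV:
  assumes "smooth_on S f" "open S" "x \<in> S"
  shows "((deriv^^n) f has_real_derivative (deriv^^(Suc n)) f x) (at x)"
proof -
  have "(deriv^^n) f differentiable_on S" using assms(1) unfolding smooth_on_def by blast
  then have "(deriv^^n) f differentiable at x"
    using assms(2,3) differentiable_on_eq_differentiable_at by blast
  then show ?thesis using DERIV_deriv_iff_real_differentiable by fastforce
qed

lemma smooth_on_DERIV0: "smooth_on S f \<Longrightarrow> open S \<Longrightarrow> x \<in> S \<Longrightarrow> (f has_real_derivative deriv f x) (at x)"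
  using smooth_on_DERIV[of S f x 0] by simp

lemma smooth_on_DERIV1:
  "smooth_on S f \<Longrightarrow> open S \<Longrightarrow> x \<in> S \<Longrightarrow> (deriv f has_real_derivative deriv (deriv f) x) (at x)"
  using smooth_on_DERIV[of S f x 1] by simp

lemma smooth_on_affine:
  assumes sm: "smooth_on S f" and S: "open S"
  shows "smooth_on S (\<lambda>x. c * f x + d)"
proof -
  let ?h = "\<lambda>x. c * f x + d"
  have D: "((\<lambda>y. c * (deriv^^n) f y + (if n = 0 then d else 0)) has_real_derivative
      c * (deriv^^(Suc n)) f x) (at x)" if "x \<in> S" for n x
    using smooth_on_DERIV[OF sm S that, of n] by (auto intro!: derivative_eq_intros)
  have eq: "\<forall>x\<in>S. (deriv^^n) ?h x = c * (deriv^^n) f x + (if n = 0 then d else 0)" for n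
  proof (induction n)
    case (Suc n)
    show ?case
    proof
      fix x assume x: "x \<in> S"
      have "((deriv^^n) ?h has_real_derivative c * (deriv^^(Suc n)) f x) (at x)"
        by (rule has_field_derivative_transform_within_open[OF D[OF x] S x]) (use Suc in auto)
      then show "(deriv^^(Suc n)) ?h x = c * (deriv^^(Suc n)) f x + (if Suc n = 0 then d else 0)"
        by (simp add: DERIV_imp_deriv)
    qed
  qed simp
  have "(deriv^^n) ?h differentiable at x" if x: "x \<in> S" for n x
  proof -
    have "((deriv^^n) ?h has_real_derivative c * (deriv^^(Suc n)) f x) (at x)"
      by (rule has_field_derivative_transform_within_open[OF D[OF x] S x]) (use eq in auto)
    then show ?thesis using real_differentiable_def by blast
  qed
  then show ?thesis
    unfolding smooth_on_def differentiable_on_eq_differentiable_at[OF S] by blast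
qed

lemma DERIV_eventually_const:
  assumes "eventually (\<lambda>y. h y = k) (nhds x)" "(h has_real_derivative D) (at x)"
  shows "D = 0"
proof -
  have "((\<lambda>_. k) has_real_derivative D) (at x)"
    using assms DERIV_cong_ev[OF refl assms(1) refl] by simp
  then show ?thesis using DERIV_const DERIV_unique by blast
qed

lemma DERIV_const_on_open:
  assumes "open S" "x \<in> S" "\<And>y. y \<in> S \<Longrightarrow> h y = k" "(h has_real_derivative D) (at x)"
  shows "D = 0"
  using assms eventually_nhds_in_open[OF assms(1,2)]
  by (intro DERIV_eventually_const[OF _ assms(4)]) (auto elim: eventually_mono)

lemma DERIV_eq_on_open:
  assumes "open S" "x \<in> S" "\<And>y. y \<in> S \<Longrightarrow> h y = k y" "(k has_real_derivative D) (at x)"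
    "(h has_real_derivative D') (at x)"
  shows "D' = D"
proof -
  have "(h has_real_derivative D) (at x)"
    by (rule has_field_derivative_transform_within_open[OF assms(4,1,2)]) (use assms(3) in auto)
  then show ?thesis using assms(5) DERIV_unique by blast
qed

lemma affine_if_const_deriv:
  fixes h :: "real \<Rightarrow> real"
  assumes "is_interval S" "\<And>x. x \<in> S \<Longrightarrow> (h has_real_derivative c) (at x)"
  shows "\<exists>d. \<forall>x\<in>S. h x = c * x + d"
proof -
  have "\<exists>d. \<forall>x\<in>S. h x - c * x = d"
  proof (rule has_field_derivative_zero_constant)
    show "convex S" using assms(1) by (rule is_interval_convex)
    fix x assume "x \<in> S"
    then have "((\<lambda>x. h x - c * x) has_real_derivative c - c * 1) (at x)"
      using assms(2) by (auto intro!: derivative_eq_intros)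
    then show "((\<lambda>x. h x - c * x) has_real_derivative 0) (at x within S)"
      by (simp add: has_field_derivative_at_within)
  qed
  then show ?thesis by (metis diff_eq_eq add.commute)
qed

lemma nonconstant_deriv_nonzero:
  assumes "open S" "is_interval S" "smooth_on S h" "\<not> (\<exists>y. \<forall>x\<in>S. h x = y)"
  shows "\<exists>x\<in>S. deriv h x \<noteq> 0"
  using affine_if_const_deriv[OF assms(2), of h 0] smooth_on_DERIV0[OF assms(3,1)] assms(4)
  by fastforce

lemma deriv_affine_on:
  assumes "open S" "smooth_on S h" "\<forall>y\<in>S. h y = c * y + d" "x \<in> S"
  shows "deriv h x = c" "deriv (deriv h) x = 0"
proof -
  have d1: "deriv h y = c" if "y \<in> S" for y
    by (rule DERIV_eq_on_open[OF assms(1) that, of h "\<lambda>y. c * y + d"])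
       (use assms that in \<open>auto intro!: derivative_eq_intros smooth_on_DERIV0\<close>)
  then show "deriv h x = c" using assms(4) .
  show "deriv (deriv h) x = 0"
    by (rule DERIV_const_on_open[OF assms(1,4) d1 smooth_on_DERIV1[OF assms(2,1,4)]])
qed

lemma continuous_nonzero_sign:
  fixes h :: "real \<Rightarrow> real"
  assumes "is_interval S" "continuous_on S h" "\<And>x. x \<in> S \<Longrightarrow> h x \<noteq> 0"
  shows "(\<forall>x\<in>S. h x > 0) \<or> (\<forall>x\<in>S. h x < 0)"
proof (rule ccontr)
  assume "\<not> ?thesis"
  then obtain x1 x2 where x: "x1 \<in> S" "x2 \<in> S" "h x1 \<le> 0" "h x2 \<ge> 0"
    by (auto simp: not_less)
  have "connected (h ` S)"
    using connected_continuous_image[OF assms(2)] assms(1) is_interval_connected_1 by blast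
  then have "0 \<in> h ` S" using x is_interval_connected_1 unfolding is_interval_1 by blast
  then show False using assms(3) by auto
qed

section \<open>The type I translation surface (s + t, f s, g t)\<close>

definition typeI_surf :: "(real \<Rightarrow> real) \<Rightarrow> (real \<Rightarrow> real) \<Rightarrow> real \<Rightarrow> real \<Rightarrow> real^3" where
  "typeI_surf f g s t = sol_pt (s + t) (f s) (g t)"

lemma translation_surface_typeI:
  "translation_surface (\<lambda>s. sol_pt s (f s) 0) (\<lambda>t. sol_pt t 0 (g t)) = typeI_surf f g"
  by (simp add: fun_eq_iff translation_surface_def sol_mult_def typeI_surf_def)

lemma typeI_surf_s:
  assumes "(f has_real_derivative a) (at s)"
  shows "surf_s (typeI_surf f g) s t = sol_pt 1 a 0"
  unfolding surf_s_def typeI_surf_def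
  by (intro vector_derivative_at has_vector_derivative_sol_pt assms derivative_eq_intros) auto

lemma typeI_surf_t:
  assumes "(g has_real_derivative b) (at t)"
  shows "surf_t (typeI_surf f g) s t = sol_pt 1 0 b"
  unfolding surf_t_def typeI_surf_def
  by (intro vector_derivative_at has_vector_derivative_sol_pt assms derivative_eq_intros) auto

lemma typeI_regular:
  assumes "(f has_real_derivative a) (at s)" "(g has_real_derivative b) (at t)"
  shows "surf_regular (typeI_surf f g) s t \<longleftrightarrow> a \<noteq> 0 \<or> b \<noteq> 0"
proof -
  have "surf_regular (typeI_surf f g) s t \<longleftrightarrow> (\<forall>x y. x + y = 0 \<and> x*a = 0 \<and> y*b = 0 \<longrightarrow> x = 0 \<and> y = 0)"
    unfolding surf_regular_def typeI_surf_s[OF assms(1)] typeI_surf_t[OF assms(2)]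
    by (simp add: vec3_eq_iff)
  also have "\<dots> \<longleftrightarrow> a \<noteq> 0 \<or> b \<noteq> 0"
  proof
    assume "\<forall>x y. x + y = 0 \<and> x*a = 0 \<and> y*b = 0 \<longrightarrow> x = 0 \<and> y = 0"
    from this[rule_format, of 1 "-1"] show "a \<noteq> 0 \<or> b \<noteq> 0" by auto
  qed auto
  finally show ?thesis .
qed

lemma typeI_unit_normal:
  assumes "(f has_real_derivative a) (at s)" "(g has_real_derivative b) (at t)"
  shows "sol_unit_normal (typeI_surf f g) s t N \<longleftrightarrow>
    exp (2*g t) * N$1 + exp (-2*g t) * a * N$2 = 0 \<and> exp (2*g t) * N$1 + b * N$3 = 0 \<and>
    exp (2*g t) * (N$1)^2 + exp (-2*g t) * (N$2)^2 + (N$3)^2 = 1"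
  unfolding sol_unit_normal_def typeI_surf_s[OF assms(1)] typeI_surf_t[OF assms(2)] sol_inner_eq
  by (simp add: typeI_surf_def power2_eq_square mult_ac)

(* Numerator and denominator of the mean curvature, in terms of a = f', a2 = f'', b = g',
   b2 = g'', z = g and the normal N;  E = e^{2z} + e^{-2z} a^2, G = e^{2z} + b^2, F = e^{2z}. *)
definition H_num :: "real \<Rightarrow> real \<Rightarrow> real \<Rightarrow> real \<Rightarrow> real \<Rightarrow> real^3 \<Rightarrow> real" where
  "H_num a a2 b b2 z N =
    (let w = exp (2*z); wi = exp (-2*z); E = w + wi*a^2; G = w + b^2 in
       2*b*(E - w)*(w*N$1) + (2*w*a*b + G*a2)*(wi*N$2) + (E*(b2 - w) + 2*w*w + G*(wi*a^2 - w))*N$3)"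

definition H_den :: "real \<Rightarrow> real \<Rightarrow> real \<Rightarrow> real" where
  "H_den a b z = (let w = exp (2*z) in 2*((w + exp (-2*z)*a^2)*(w + b^2) - w^2))"

lemma typeI_mean_curv:
  assumes I: "open I" "s \<in> I" and J: "open J" "t \<in> J"
    and df: "\<And>s. s \<in> I \<Longrightarrow> (f has_real_derivative f1 s) (at s)"
    and df1: "(f1 has_real_derivative f2) (at s)"
    and dg: "\<And>t. t \<in> J \<Longrightarrow> (g has_real_derivative g1 t) (at t)"
    and dg1: "(g1 has_real_derivative g2) (at t)"
  shows "sol_mean_curv (typeI_surf f g) N s t = H_num (f1 s) f2 (g1 t) g2 (g t) N / H_den (f1 s) (g1 t) (g t)"
proof -
  have ss: "vector_derivative (\<lambda>s'. surf_s (typeI_surf f g) s' t) (at s) = sol_pt 0 f2 0"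
  proof (rule vector_derivative_at)
    have "((\<lambda>s'. sol_pt 1 (f1 s') 0) has_vector_derivative sol_pt 0 f2 0) (at s)"
      by (intro has_vector_derivative_sol_pt df1 DERIV_const)
    then show "((\<lambda>s'. surf_s (typeI_surf f g) s' t) has_vector_derivative sol_pt 0 f2 0) (at s)"
      by (rule has_vector_derivative_transform_within_open[OF _ I]) (metis typeI_surf_s df)
  qed
  have tt: "vector_derivative (\<lambda>t'. surf_t (typeI_surf f g) s t') (at t) = sol_pt 0 0 g2"
  proof (rule vector_derivative_at)
    have "((\<lambda>t'. sol_pt 1 0 (g1 t')) has_vector_derivative sol_pt 0 0 g2) (at t)"
      by (intro has_vector_derivative_sol_pt dg1 DERIV_const)
    then show "((\<lambda>t'. surf_t (typeI_surf f g) s t') has_vector_derivative sol_pt 0 0 g2) (at t)"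
      by (rule has_vector_derivative_transform_within_open[OF _ J]) (metis typeI_surf_t dg)
  qed
  have st: "vector_derivative (\<lambda>t'. surf_s (typeI_surf f g) s t') (at t) = 0"
    using typeI_surf_s[OF df[OF I(2)]] by (simp add: vector_derivative_const_at)
  show ?thesis
    unfolding sol_mean_curv_def Let_def ss tt st typeI_surf_s[OF df[OF I(2)]] typeI_surf_t[OF dg[OF J(2)]]
    by (simp add: sol_inner_eq sol_cov_eq typeI_surf_def H_num_def H_den_def Let_def algebra_simps power2_eq_square)
qed

section \<open>Reduction of minimality to a partial differential equation\<close>

definition minimality_lhs :: "real \<Rightarrow> real \<Rightarrow> real \<Rightarrow> real \<Rightarrow> real \<Rightarrow> real" where
  "minimality_lhs a a2 b b2 z =
    (let w = exp (2*z) in a*b2*(w^2 + a^2) + a2*b*(w^2 + w*b^2) + a*b^2*(w^2 - a^2))"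

lemma H_num_normal:
  assumes o1: "exp (2*z) * N$1 + exp (-2*z) * a * N$2 = 0" and o2: "exp (2*z) * N$1 + b * N$3 = 0"
  shows "exp (2*z) * H_num a a2 b b2 z N * b = minimality_lhs a a2 b b2 z * (exp (-2*z) * N$2)"
    and "exp (2*z) * H_num a a2 b b2 z N * a = minimality_lhs a a2 b b2 z * N$3"
proof -
  have wwi: "exp (2*z) * exp (-2*z) = 1" by (simp add: mult_exp_exp)
  show "exp (2*z) * H_num a a2 b b2 z N * b = minimality_lhs a a2 b b2 z * (exp (-2*z) * N$2)"
    using wwi o1 o2 unfolding H_num_def minimality_lhs_def Let_def by algebra
  show "exp (2*z) * H_num a a2 b b2 z N * a = minimality_lhs a a2 b b2 z * N$3"
    using wwi o1 o2 unfolding H_num_def minimality_lhs_def Let_def by algebra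
qed

(* E G - F^2 = e^{2z} b^2 + e^{-2z} a^2 (e^{2z} + b^2) is positive at regular points. *)
lemma H_den_pos:
  assumes "a \<noteq> 0 \<or> b \<noteq> 0"
  shows "H_den a b z > 0"
proof -
  have "H_den a b z = 2 * (exp (2*z) * b^2 + exp (-2*z) * a^2 * (exp (2*z) + b^2))"
    unfolding H_den_def Let_def by algebra
  moreover have "exp (2*z) * b^2 > 0 \<or> exp (-2*z) * a^2 * (exp (2*z) + b^2) > 0"
    using assms by (cases "b = 0") (simp_all add: zero_less_mult_iff add_pos_nonneg)
  ultimately show ?thesis by (auto intro: add_pos_nonneg add_nonneg_pos)
qed

lemma typeI_normal_exists:
  assumes "a \<noteq> 0 \<or> b \<noteq> 0"
  shows "\<exists>N :: real^3. exp (2*z) * N$1 + exp (-2*z) * a * N$2 = 0 \<and> exp (2*z) * N$1 + b * N$3 = 0 \<and>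
     exp (2*z) * (N$1)^2 + exp (-2*z) * (N$2)^2 + (N$3)^2 = 1 \<and> (N$2 \<noteq> 0 \<or> N$3 \<noteq> 0)"
proof -
  define w where "w = exp (2*z)"
  define wi where "wi = exp (-2*z)"
  have wwi: "w * wi = 1" by (simp add: w_def wi_def mult_exp_exp)
  have w0: "w > 0" "wi > 0" by (simp_all add: w_def wi_def)
  define q where "q = wi*a^2*b^2 + w*b^2 + a^2"
  have "w*b^2 > 0 \<or> a^2 > 0" "wi*a^2*b^2 \<ge> 0" "w*b^2 \<ge> 0" using assms w0 by auto
  then have q0: "q > 0" unfolding q_def using zero_le_power2[of a] by linarith
  define N where "N = sol_pt (wi*a*b / sqrt q) (- w*b / sqrt q) (- a / sqrt q)"
  have o1: "w * N$1 + wi * a * N$2 = 0" and o2: "w * N$1 + b * N$3 = 0"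
    unfolding N_def using wwi by (simp_all add: field_simps)
  have "w * (N$1)^2 + wi * (N$2)^2 + (N$3)^2 = (w*wi*(wi*a^2*b^2) + (w*wi)*w*b^2 + a^2) / (sqrt q)^2"
    unfolding N_def
    by (simp add: power_divide field_simps) (simp add: algebra_simps power2_eq_square add_divide_distrib)
  also have "\<dots> = 1" using wwi q0 by (simp add: q_def)
  finally have o3: "w * (N$1)^2 + wi * (N$2)^2 + (N$3)^2 = 1" .
  have "N$2 \<noteq> 0 \<or> N$3 \<noteq> 0" using assms q0 w0 unfolding N_def by auto
  then show ?thesis using o1 o2 o3 unfolding w_def wi_def by blast
qed

lemma typeI_minimal_at:
  assumes I: "open I" "s \<in> I" and J: "open J" "t \<in> J"
    and df: "\<And>s. s \<in> I \<Longrightarrow> (f has_real_derivative f1 s) (at s)"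
    and df1: "(f1 has_real_derivative f2) (at s)"
    and dg: "\<And>t. t \<in> J \<Longrightarrow> (g has_real_derivative g1 t) (at t)"
    and dg1: "(g1 has_real_derivative g2) (at t)"
  shows "(surf_regular (typeI_surf f g) s t \<longrightarrow>
            (\<forall>N. sol_unit_normal (typeI_surf f g) s t N \<longrightarrow> sol_mean_curv (typeI_surf f g) N s t = 0))
     \<longleftrightarrow> minimality_lhs (f1 s) f2 (g1 t) g2 (g t) = 0"
proof (cases "f1 s \<noteq> 0 \<or> g1 t \<noteq> 0")
  case False
  then show ?thesis
    using typeI_regular[OF df[OF I(2)] dg[OF J(2)]] by (simp add: minimality_lhs_def)
next
  case True
  let ?P = "minimality_lhs (f1 s) f2 (g1 t) g2 (g t)"
  note normal = typeI_unit_normal[OF df[OF I(2)] dg[OF J(2)]]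
  have H0: "sol_mean_curv (typeI_surf f g) N s t = 0 \<longleftrightarrow>
      ?P * (exp (-2 * g t) * N$2) = 0 \<and> ?P * N$3 = 0"
    if "sol_unit_normal (typeI_surf f g) s t N" for N
  proof -
    let ?H = "H_num (f1 s) f2 (g1 t) g2 (g t) N"
    have "exp (2 * g t) * N$1 + exp (-2 * g t) * f1 s * N$2 = 0" "exp (2 * g t) * N$1 + g1 t * N$3 = 0"
      using that normal by simp_all
    note rel = H_num_normal[OF this, of f2 g2]
    have "sol_mean_curv (typeI_surf f g) N s t = 0 \<longleftrightarrow> ?H = 0"
      using typeI_mean_curv[OF I J df df1 dg dg1] H_den_pos[OF True, of "g t"] by simp
    also have "\<dots> \<longleftrightarrow> exp (2 * g t) * ?H * g1 t = 0 \<and> exp (2 * g t) * ?H * f1 s = 0"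
      using True by auto
    also have "\<dots> \<longleftrightarrow> ?P * (exp (-2 * g t) * N$2) = 0 \<and> ?P * N$3 = 0"
      by (simp only: rel)
    finally show ?thesis .
  qed
  have "(\<forall>N. sol_unit_normal (typeI_surf f g) s t N \<longrightarrow> sol_mean_curv (typeI_surf f g) N s t = 0)
      \<longleftrightarrow> ?P = 0"
  proof
    assume all: "\<forall>N. sol_unit_normal (typeI_surf f g) s t N \<longrightarrow> sol_mean_curv (typeI_surf f g) N s t = 0"
    obtain N where N: "sol_unit_normal (typeI_surf f g) s t N" "N$2 \<noteq> 0 \<or> N$3 \<noteq> 0"
      using typeI_normal_exists[OF True, of "g t"] normal by blast
    show "?P = 0" using H0[OF N(1)] all N by auto
  qed (use H0 in auto)
  then show ?thesis using typeI_regular[OF df[OF I(2)] dg[OF J(2)]] True by simp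
qed

lemma typeI_minimal_iff:
  assumes I: "open I" and J: "open J" and sf: "smooth_on I f" and sg: "smooth_on J g"
  shows "sol_minimal (typeI_surf f g) (I \<times> J) \<longleftrightarrow>
    (\<forall>s\<in>I. \<forall>t\<in>J. minimality_lhs (deriv f s) (deriv (deriv f) s) (deriv g t) (deriv (deriv g) t) (g t) = 0)"
proof -
  have "(surf_regular (typeI_surf f g) s t \<longrightarrow>
          (\<forall>N. sol_unit_normal (typeI_surf f g) s t N \<longrightarrow> sol_mean_curv (typeI_surf f g) N s t = 0))
     \<longleftrightarrow> minimality_lhs (deriv f s) (deriv (deriv f) s) (deriv g t) (deriv (deriv g) t) (g t) = 0"
    if "s \<in> I" "t \<in> J" for s t
    by (rule typeI_minimal_at[OF I that(1) J that(2)])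
       (use that in \<open>auto intro: smooth_on_DERIV0[OF sf I] smooth_on_DERIV1[OF sf I]
          smooth_on_DERIV0[OF sg J] smooth_on_DERIV1[OF sg J]\<close>)
  then show ?thesis unfolding sol_minimal_def by auto
qed

section \<open>Solving the minimality equation\<close>

lemma minimality_lhs_split:
  "minimality_lhs a a2 b b2 z =
     a * (exp (2*z)^2 * (b2 + b^2)) + a^3 * (b2 - b^2) + a2 * (exp (2*z) * b * (exp (2*z) + b^2))"
  unfolding minimality_lhs_def Let_def by algebra

(* If u(s) X(t) + u(s)^3 Y(t) = 0 identically, and u u' \<noteq> 0 at some point (so that |u| is not
   locally constant), then X = Y = 0. *)
lemma separation_of_variables:
  fixes u u' :: "real \<Rightarrow> real" and X Y :: "'a \<Rightarrow> real"
  assumes I: "open I" "s0 \<in> I" and du: "\<And>s. s \<in> I \<Longrightarrow> (u has_real_derivative u' s) (at s)"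
    and nz: "u s0 \<noteq> 0" "u' s0 \<noteq> 0"
    and eq: "\<And>s t. s \<in> I \<Longrightarrow> t \<in> T \<Longrightarrow> u s * X t + (u s)^3 * Y t = 0"
    and t: "t \<in> T"
  shows "X t = 0" "Y t = 0"
proof -
  show Y0: "Y t = 0"
  proof (rule ccontr)
    assume Yn: "Y t \<noteq> 0"
    have "u s0 * (X t + (u s0)^2 * Y t) = 0" using eq[OF I(2) t] by algebra
    then have Xt: "X t = - ((u s0)^2 * Y t)" using nz(1) by simp
    have same_modulus: "(u s)^2 = (u s0)^2" if "s \<in> I" "u s \<noteq> 0" for s
    proof -
      have "u s * ((u s)^2 - (u s0)^2) * Y t = 0" using eq[OF that(1) t] Xt by algebra
      then show ?thesis using that(2) Yn by simp
    qed
    have "isCont u s0" using du[OF I(2)] DERIV_isCont by blast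
    then have "eventually (\<lambda>s. u s \<noteq> 0) (nhds s0)"
      using nz(1) tendsto_imp_eventually_ne by (simp add: isCont_def tendsto_at_iff_tendsto_nhds)
    then have "eventually (\<lambda>s. (u s)^2 = (u s0)^2) (nhds s0)"
      using eventually_nhds_in_open[OF I] by eventually_elim (use same_modulus in auto)
    moreover have "((\<lambda>s. (u s)^2) has_real_derivative 2 * u s0 * u' s0) (at s0)"
      using du[OF I(2)] by (auto intro!: derivative_eq_intros)
    ultimately have "2 * u s0 * u' s0 = 0" by (rule DERIV_eventually_const)
    then show False using nz by simp
  qed
  show "X t = 0" using eq[OF I(2) t] Y0 nz(1) by simp
qed

(* Algebraic steps of the analysis of the ODE system of the case f'' \<noteq> 0, with u = g',
   w = e^{2g}, p = g''; the first two are the equations themselves. *)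
lemma typeB_alg1:
  fixes u w p al be dP :: real
  assumes E1: "w^2*(p+u^2) + al*w*u*(w+u^2) = 0" and E2: "p - u^2 + be*w*u*(w+u^2) = 0"
    and d0: "2*(2*u*w)*u^2 + 2*w*(2*u*p) + al*(p*(w+u^2) + u*(2*u*w + 2*u*p))
        - be*(2*w*(2*u*w)*u*(w+u^2) + w^2*p*(w+u^2) + w^2*u*(2*u*w + 2*u*p)) = 0"
  shows "u^2 * w^2 * (p*(3*w+u^2) - 2*u^2*w) = 0"
proof -
  define S where "S = w + u^2"
  define Q where "Q = p*S + 2*u^2*w + 2*u^2*p"
  define R where "R = 4*w^2*u^2*S + w^2*p*S + 2*w^3*u^2 + 2*w^2*u^2*p"
  have "w*u*S*(2*(2*u*w)*u^2 + 2*w*(2*u*p) + al*(p*(w+u^2) + u*(2*u*w + 2*u*p))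
        - be*(2*w*(2*u*w)*u*(w+u^2) + w^2*p*(w+u^2) + w^2*u*(2*u*w + 2*u*p)))
     = 2*(u^2 * w^2 * (p*(3*w+u^2) - 2*u^2*w))
       + (w^2*(p+u^2) + al*w*u*(w+u^2))*Q - (p - u^2 + be*w*u*(w+u^2))*R"
    unfolding S_def Q_def R_def by algebra
  then show ?thesis using E1 E2 d0 by simp
qed

lemma typeB_alg2:
  fixes u w p be :: real
  assumes E2: "p - u^2 + be*w*u*(w+u^2) = 0" and k1: "p*(3*w+u^2) = 2*u^2*w"
    and u: "u \<noteq> 0" and w: "w > 0"
  shows "be*w*(3*w+u^2) = u"
proof -
  have id: "u*(w+u^2)*(be*w*(3*w+u^2) - u)
      = (3*w+u^2)*(p - u^2 + be*w*u*(w+u^2)) - (p*(3*w+u^2) - 2*u^2*w)"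
    by algebra
  have "w + u^2 > 0" using w by (simp add: add_pos_nonneg)
  then have "u*(w+u^2) \<noteq> 0" using u by simp
  then show ?thesis using id E2 k1 by simp
qed

lemma typeB_alg3:
  fixes u w p be :: real
  assumes k1: "p*(3*w+u^2) = 2*u^2*w" and k2: "be*w*(3*w+u^2) = u"
    and d0: "be*(2*u*w*(3*w+u^2) + w*(6*u*w + 2*u*p)) - p = 0"
    and u: "u \<noteq> 0" and w: "w > 0"
  shows False
proof -
  have id: "(3*w+u^2)*(be*(2*u*w*(3*w+u^2) + w*(6*u*w + 2*u*p)) - p)
      = 2*u^2*(5*w+u^2+p) + (2*u*(3*w+u^2)+6*u*w+2*u*p)*(be*w*(3*w+u^2) - u)
        - (p*(3*w+u^2) - 2*u^2*w)"
    by algebra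
  have pos: "3*w+u^2 > 0" using w by (simp add: add_pos_nonneg)
  then have "p \<ge> 0" using k1 w by (metis zero_le_mult_iff zero_le_power2 less_imp_le not_le mult_pos_pos
      zero_less_numeral)
  then have "5*w+u^2+p > 0" using w by (simp add: add_pos_nonneg)
  moreover have "u^2*(5*w+u^2+p) = 0" using id k1 k2 d0 by simp
  ultimately show False using u by simp
qed

(* Differentiating the system E1, E2 once yields two algebraic relations wherever g' \<noteq> 0. *)
lemma typeB_relations:
  fixes g g' g'' :: "real \<Rightarrow> real"
  assumes J: "open J" and t: "t \<in> J" "g' t \<noteq> 0"
   and Dg: "\<And>t. t \<in> J \<Longrightarrow> (g has_real_derivative g' t) (at t)"
   and Dg': "\<And>t. t \<in> J \<Longrightarrow> (g' has_real_derivative g'' t) (at t)"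
   and E1: "\<And>t. t \<in> J \<Longrightarrow> exp (2*g t)^2*(g'' t + (g' t)^2) + al*exp (2*g t)*g' t*(exp (2*g t) + (g' t)^2) = 0"
   and E2: "\<And>t. t \<in> J \<Longrightarrow> g'' t - (g' t)^2 + be*exp (2*g t)*g' t*(exp (2*g t) + (g' t)^2) = 0"
  shows "g'' t * (3 * exp (2*g t) + (g' t)^2) = 2 * (g' t)^2 * exp (2*g t)"
    and "be * exp (2*g t) * (3 * exp (2*g t) + (g' t)^2) = g' t"
proof -
  define w where "w t = exp (2 * g t)" for t
  have w0: "w t > 0" for t by (simp add: w_def)
  (* \<Phi> = (E1 - w^2 E2) / w vanishes identically, hence so does its derivative. *)
  define \<Phi> where "\<Phi> t = 2 * w t * (g' t)^2 + al * g' t * (w t + (g' t)^2) - be * (w t)^2 * g' t * (w t + (g' t)^2)" for t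
  have \<Phi>0: "\<Phi> t = 0" if "t \<in> J" for t
  proof -
    have "w t * \<Phi> t = (w t^2*(g'' t + (g' t)^2) + al*w t*g' t*(w t + (g' t)^2))
        - (w t)^2 * (g'' t - (g' t)^2 + be*w t*g' t*(w t + (g' t)^2))"
      unfolding \<Phi>_def by algebra
    then show ?thesis using E1[OF that] E2[OF that] w0[of t] by (simp add: w_def)
  qed
  have Dw: "(w has_real_derivative 2 * g' t * w t) (at t)"
    unfolding w_def[abs_def] using Dg[OF t(1)] by (auto intro!: derivative_eq_intros)
  have D\<Phi>: "(\<Phi> has_real_derivative
      2*(2*g' t*w t)*(g' t)^2 + 2*w t*(2*g' t*g'' t) + al*(g'' t*(w t+(g' t)^2) + g' t*(2*g' t*w t + 2*g' t*g'' t))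
        - be*(2*w t*(2*g' t*w t)*g' t*(w t+(g' t)^2) + (w t)^2*g'' t*(w t+(g' t)^2)
              + (w t)^2*g' t*(2*g' t*w t + 2*g' t*g'' t))) (at t)"
    unfolding \<Phi>_def[abs_def] using Dw Dg'[OF t(1)]
    by (auto intro!: derivative_eq_intros simp: algebra_simps power2_eq_square)
  have "(g' t)^2 * (w t)^2 * (g'' t*(3*w t+(g' t)^2) - 2*(g' t)^2*w t) = 0"
    by (rule typeB_alg1[OF E1[OF t(1), folded w_def] E2[OF t(1), folded w_def]
          DERIV_const_on_open[OF J t(1) \<Phi>0 D\<Phi>]])
  then show k1: "g'' t * (3 * exp (2*g t) + (g' t)^2) = 2 * (g' t)^2 * exp (2*g t)"
    using t(2) w0[of t] by (simp add: w_def)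
  show "be * exp (2*g t) * (3 * exp (2*g t) + (g' t)^2) = g' t"
    by (rule typeB_alg2[OF E2[OF t(1)] k1 t(2)]) simp
qed

lemma no_typeB_solution:
  fixes g g' g'' :: "real \<Rightarrow> real"
  assumes J: "open J" and t0: "t0 \<in> J" "g' t0 \<noteq> 0"
   and Dg: "\<And>t. t \<in> J \<Longrightarrow> (g has_real_derivative g' t) (at t)"
   and Dg': "\<And>t. t \<in> J \<Longrightarrow> (g' has_real_derivative g'' t) (at t)"
   and E1: "\<And>t. t \<in> J \<Longrightarrow> exp (2*g t)^2*(g'' t + (g' t)^2) + al*exp (2*g t)*g' t*(exp (2*g t) + (g' t)^2) = 0"
   and E2: "\<And>t. t \<in> J \<Longrightarrow> g'' t - (g' t)^2 + be*exp (2*g t)*g' t*(exp (2*g t) + (g' t)^2) = 0"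
  shows False
proof -
  note rel = typeB_relations[OF J _ _ Dg Dg' E1 E2]
  define w where "w t = exp (2 * g t)" for t
  (* \<psi> vanishes near t0, where g' \<noteq> 0 by continuity. *)
  define \<psi> where "\<psi> t = be * w t * (3 * w t + (g' t)^2) - g' t" for t
  have "isCont g' t0" using Dg'[OF t0(1)] DERIV_isCont by blast
  then have "eventually (\<lambda>t. g' t \<noteq> 0) (nhds t0)"
    using t0(2) tendsto_imp_eventually_ne by (simp add: isCont_def tendsto_at_iff_tendsto_nhds)
  then have "eventually (\<lambda>t. \<psi> t = 0) (nhds t0)"
    using eventually_nhds_in_open[OF J t0(1)] by eventually_elim (use rel(2) in \<open>auto simp: \<psi>_def w_def\<close>)
  moreover have "(\<psi> has_real_derivative
     be*(2*g' t0*w t0*(3*w t0+(g' t0)^2) + w t0*(6*g' t0*w t0 + 2*g' t0*g'' t0)) - g'' t0) (at t0)"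
    unfolding \<psi>_def[abs_def] w_def using Dg[OF t0(1)] Dg'[OF t0(1)]
    by (auto intro!: derivative_eq_intros simp: algebra_simps power2_eq_square)
  ultimately have "be*(2*g' t0*w t0*(3*w t0+(g' t0)^2) + w t0*(6*g' t0*w t0 + 2*g' t0*g'' t0)) - g'' t0 = 0"
    by (rule DERIV_eventually_const)
  then show False
    using typeB_alg3[OF rel(1)[OF t0] rel(2)[OF t0], folded w_def] t0(2) by (simp add: w_def)
qed

lemma minimality_forces_f_affine:
  fixes f' f'' g g' g'' :: "real \<Rightarrow> real"
  assumes I: "open I" and J: "open J"
   and Df': "\<And>s. s \<in> I \<Longrightarrow> (f' has_real_derivative f'' s) (at s)"
   and Dg: "\<And>t. t \<in> J \<Longrightarrow> (g has_real_derivative g' t) (at t)"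
   and Dg': "\<And>t. t \<in> J \<Longrightarrow> (g' has_real_derivative g'' t) (at t)"
   and P: "\<And>s t. s \<in> I \<Longrightarrow> t \<in> J \<Longrightarrow> minimality_lhs (f' s) (f'' s) (g' t) (g'' t) (g t) = 0"
   and t0: "t0 \<in> J" "g' t0 \<noteq> 0" and s: "s \<in> I"
  shows "f'' s = 0"
proof (rule ccontr)
  assume f''s: "f'' s \<noteq> 0"
  define w where "w t = exp (2 * g t)" for t
  define A where "A t = (w t)^2 * (g'' t + (g' t)^2)" for t
  define B where "B t = g'' t - (g' t)^2" for t
  define C where "C t = w t * g' t * (w t + (g' t)^2)" for t
  have P': "f' s * A t + (f' s)^3 * B t + f'' s * C t = 0" if "s \<in> I" "t \<in> J" for s t
    using P[OF that] unfolding minimality_lhs_split A_def B_def C_def w_def by simp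
  have "w t0 + (g' t0)^2 > 0" by (simp add: w_def add_pos_nonneg)
  then have C0: "C t0 \<noteq> 0" using t0(2) by (simp add: C_def w_def)
  (* Freezing t = t0 expresses f'' as a cubic polynomial in f'. *)
  define al where "al = - A t0 / C t0"
  define be where "be = - B t0 / C t0"
  have f''_poly: "f'' s = al * f' s + be * (f' s)^3" if "s \<in> I" for s
  proof -
    have "f'' s * C t0 = - (f' s * A t0 + (f' s)^3 * B t0)" using P'[OF that t0(1)] by simp
    then show ?thesis using C0 unfolding al_def be_def by (simp add: field_simps)
  qed
  have f's: "f' s \<noteq> 0" using f''_poly[OF s] f''s by auto
  have sep: "f' s * (A t + al * C t) + (f' s)^3 * (B t + be * C t) = 0" if "s \<in> I" "t \<in> J" for s t
    using P'[OF that] unfolding f''_poly[OF that(1)] by (simp add: algebra_simps)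
  have XY0: "A t + al * C t = 0" "B t + be * C t = 0" if "t \<in> J" for t
    using separation_of_variables[where u = f' and u' = f'' and T = J and
      X = "\<lambda>t. A t + al * C t" and Y = "\<lambda>t. B t + be * C t"] I s Df' f's f''s sep that
    by blast+
  show False
  proof (rule no_typeB_solution[OF J t0 Dg Dg'])
    show "exp (2*g t)^2*(g'' t + (g' t)^2) + al*exp (2*g t)*g' t*(exp (2*g t) + (g' t)^2) = 0"
      if "t \<in> J" for t
      using XY0(1)[OF that] unfolding A_def C_def w_def by (simp add: mult_ac)
    show "g'' t - (g' t)^2 + be*exp (2*g t)*g' t*(exp (2*g t) + (g' t)^2) = 0" if "t \<in> J" for t
      using XY0(2)[OF that] unfolding B_def C_def w_def by (simp add: mult_ac)
  qed
qed

lemma minimality_lhs_affine: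
  fixes a m z z1 z2 :: real
  assumes e4m: "exp (4 * m) = a^2"
  shows "minimality_lhs a 0 (z1/2) (z2/2) (z/2 + m) = a^3 * exp z / 2 * (2 * z2 * cosh z + z1^2 * sinh z)"
proof -
  define E where "E = exp z"
  define M where "M = exp (2 * m)"
  have E0: "E > 0" by (simp add: E_def)
  have "M^2 = a^2" using e4m unfolding M_def by (simp add: power2_eq_square mult_exp_exp)
  then have EM2: "(E*M)^2 = E^2 * a^2" by (simp add: power_mult_distrib)
  have w: "exp (2 * (z/2 + m)) = E * M" by (simp add: E_def M_def mult_exp_exp algebra_simps)
  have "minimality_lhs a 0 (z1/2) (z2/2) (z/2 + m) = a * (z2/2 * ((E*M)^2 + a^2) + (z1/2)^2 * ((E*M)^2 - a^2))"
    unfolding minimality_lhs_def Let_def w by (simp add: algebra_simps)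
  also have "\<dots> = a^3 * (z2/2 * (E^2 + 1) + (z1/2)^2 * (E^2 - 1))"
    unfolding EM2 by algebra
  also have "\<dots> = a^3 * E / 2 * (2 * z2 * cosh z + z1^2 * sinh z)"
    unfolding cosh_def sinh_def exp_minus E_def[symmetric] using E0
    by (simp add: field_simps power2_eq_square)
  finally show ?thesis by (simp add: E_def)
qed

lemma first_integral_deriv:
  assumes "(z has_real_derivative z1 t) (at t)" "(z1 has_real_derivative z2) (at t)"
  shows "((\<lambda>t. (z1 t)^2 * cosh (z t)) has_real_derivative
           z1 t * (2 * z2 * cosh (z t) + (z1 t)^2 * sinh (z t))) (at t)"
  using assms by (auto intro!: derivative_eq_intros simp: algebra_simps power2_eq_square)

lemma affine_case_solutions:
  fixes f f' g g' g'' :: "real \<Rightarrow> real"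
  assumes I: "is_interval I" and J: "open J" "is_interval J" and sg: "smooth_on J g"
   and Df: "\<And>s. s \<in> I \<Longrightarrow> (f has_real_derivative f' s) (at s)"
   and Df': "\<And>s. s \<in> I \<Longrightarrow> (f' has_real_derivative 0) (at s)"
   and Dg: "\<And>t. t \<in> J \<Longrightarrow> (g has_real_derivative g' t) (at t)"
   and Dg': "\<And>t. t \<in> J \<Longrightarrow> (g' has_real_derivative g'' t) (at t)"
   and P: "\<And>s t. s \<in> I \<Longrightarrow> t \<in> J \<Longrightarrow> minimality_lhs (f' s) 0 (g' t) (g'' t) (g t) = 0"
   and s1: "s1 \<in> I" "f' s1 \<noteq> 0" and t0: "t0 \<in> J" "g' t0 \<noteq> 0"
  shows "\<exists>a b m c \<zeta>. a \<noteq> 0 \<and> (\<forall>s\<in>I. f s = a * s + b) \<and> exp (4 * m) = a^2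
            \<and> c > 0 \<and> smooth_on J \<zeta> \<and> (\<forall>t\<in>J. (deriv \<zeta> t)^2 * cosh (\<zeta> t) = c^2)
            \<and> (\<forall>t\<in>J. g t = \<zeta> t / 2 + m)"
proof -
  obtain a where a: "\<forall>s\<in>I. f' s = a" using affine_if_const_deriv[OF I Df'] by auto
  then have "(f has_real_derivative a) (at s)" if "s \<in> I" for s using Df[OF that] that by simp
  then obtain b where b: "\<forall>s\<in>I. f s = a * s + b" using affine_if_const_deriv[OF I, of f a] by auto
  have a0: "a \<noteq> 0" using a s1 by auto
  define m where "m = ln \<bar>a\<bar> / 2"
  have "exp (4 * m) = exp (2 * m)^2" by (simp add: power2_eq_square mult_exp_exp)
  then have e4m: "exp (4 * m) = a^2" using a0 by (simp add: m_def)
  define \<zeta> where "\<zeta> = (\<lambda>t. 2 * g t + (- 2 * m))"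
  have g\<zeta>: "g t = \<zeta> t / 2 + m" for t by (simp add: \<zeta>_def field_simps)
  have sz: "smooth_on J \<zeta>" unfolding \<zeta>_def by (rule smooth_on_affine[OF sg J(1)])
  have D\<zeta>: "(\<zeta> has_real_derivative 2 * g' t) (at t)" if "t \<in> J" for t
    unfolding \<zeta>_def using Dg[OF that] by (auto intro!: derivative_eq_intros)
  have ode: "2 * (2 * g'' t) * cosh (\<zeta> t) + (2 * g' t)^2 * sinh (\<zeta> t) = 0" if "t \<in> J" for t
  proof -
    have "a^3 * exp (\<zeta> t) / 2 * (2 * (2 * g'' t) * cosh (\<zeta> t) + (2 * g' t)^2 * sinh (\<zeta> t))
        = minimality_lhs a 0 (2 * g' t / 2) (2 * g'' t / 2) (\<zeta> t / 2 + m)"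
      by (rule minimality_lhs_affine[OF e4m, symmetric])
    also have "\<dots> = minimality_lhs (f' s1) 0 (g' t) (g'' t) (g t)" using a s1(1) by (simp flip: g\<zeta>)
    also have "\<dots> = 0" using P[OF s1(1) that] .
    finally show ?thesis using a0 by simp
  qed
  have "((\<lambda>t. (2 * g' t)^2 * cosh (\<zeta> t)) has_real_derivative 0) (at t)" if "t \<in> J" for t
  proof -
    have "((\<lambda>t. 2 * g' t) has_real_derivative 2 * g'' t) (at t)"
      using Dg'[OF that] by (auto intro!: derivative_eq_intros)
    from first_integral_deriv[OF D\<zeta>[OF that] this] show ?thesis using ode[OF that] by simp
  qed
  then have "\<exists>k. \<forall>t\<in>J. (2 * g' t)^2 * cosh (\<zeta> t) = 0 * t + k"
    by (rule affine_if_const_deriv[OF J(2)])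
  then obtain k where k: "\<forall>t\<in>J. (2 * g' t)^2 * cosh (\<zeta> t) = k" by auto
  have "k = (2 * g' t0)^2 * cosh (\<zeta> t0)" using k t0(1) by simp
  then have k0: "k > 0" using t0(2) by simp
  have "\<forall>t\<in>J. (deriv \<zeta> t)^2 * cosh (\<zeta> t) = (sqrt k)^2"
    using k k0 DERIV_imp_deriv[OF D\<zeta>] by simp
  moreover have "sqrt k > 0" using k0 by simp
  ultimately show ?thesis
    using a0 b e4m sz g\<zeta> by blast
qed

lemma affine_case_minimal:
  assumes I: "open I" and J: "open J" and sf: "smooth_on I f" and sg: "smooth_on J g"
    and f: "\<forall>s\<in>I. f s = a * s + b" and e4m: "exp (4 * m) = a^2"
    and c: "c > 0" and sz: "smooth_on J \<zeta>" and ode: "\<forall>t\<in>J. (deriv \<zeta> t)^2 * cosh (\<zeta> t) = c^2"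
    and g: "\<forall>t\<in>J. g t = \<zeta> t / 2 + m"
    and s: "s \<in> I" and t: "t \<in> J"
  shows "minimality_lhs (deriv f s) (deriv (deriv f) s) (deriv g t) (deriv (deriv g) t) (g t) = 0"
proof -
  have g1: "deriv g t = deriv \<zeta> t / 2" if "t \<in> J" for t
    by (rule DERIV_eq_on_open[OF J that, of g "\<lambda>t. \<zeta> t / 2 + m"])
       (use g that in \<open>auto intro!: derivative_eq_intros smooth_on_DERIV0[OF sg J] smooth_on_DERIV0[OF sz J]\<close>)
  have g2: "deriv (deriv g) t = deriv (deriv \<zeta>) t / 2"
    by (rule DERIV_eq_on_open[OF J t, of "deriv g" "\<lambda>t. deriv \<zeta> t / 2"])
       (use g1 t in \<open>auto intro!: derivative_eq_intros smooth_on_DERIV1[OF sg J] smooth_on_DERIV1[OF sz J]\<close>)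
  (* Differentiating the first integral gives the ODE, since \<zeta>' never vanishes. *)
  have "deriv \<zeta> t * (2 * deriv (deriv \<zeta>) t * cosh (\<zeta> t) + (deriv \<zeta> t)^2 * sinh (\<zeta> t)) = 0"
    by (rule DERIV_const_on_open[OF J t _ first_integral_deriv[OF smooth_on_DERIV0[OF sz J t]
          smooth_on_DERIV1[OF sz J t]]]) (use ode in auto)
  moreover have "deriv \<zeta> t \<noteq> 0" using ode t c by fastforce
  ultimately have "2 * deriv (deriv \<zeta>) t * cosh (\<zeta> t) + (deriv \<zeta> t)^2 * sinh (\<zeta> t) = 0" by simp
  then show ?thesis
    unfolding deriv_affine_on[OF I sf f s] g1[OF t] g2 g[rule_format, OF t] minimality_lhs_affine[OF e4m]
    by simp
qed

lemma minimality_equation_solutions: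
  assumes I: "open I" "is_interval I" and J: "open J" "is_interval J"
    and sf: "smooth_on I f" and sg: "smooth_on J g"
  shows "(\<forall>s\<in>I. \<forall>t\<in>J. minimality_lhs (deriv f s) (deriv (deriv f) s) (deriv g t) (deriv (deriv g) t) (g t) = 0)
     \<longleftrightarrow> (\<exists>y0. \<forall>s\<in>I. f s = y0) \<or> (\<exists>z0. \<forall>t\<in>J. g t = z0)
      \<or> (\<exists>a b m c \<zeta>. a \<noteq> 0 \<and> (\<forall>s\<in>I. f s = a * s + b) \<and> exp (4 * m) = a^2
            \<and> c > 0 \<and> smooth_on J \<zeta> \<and> (\<forall>t\<in>J. (deriv \<zeta> t)^2 * cosh (\<zeta> t) = c^2)
            \<and> (\<forall>t\<in>J. g t = \<zeta> t / 2 + m))"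
    (is "?P \<longleftrightarrow> ?const_f \<or> ?const_g \<or> ?family")
proof
  assume P: ?P
  show "?const_f \<or> ?const_g \<or> ?family"
  proof (cases "?const_f \<or> ?const_g")
    case False
    then obtain s1 t0 where s1: "s1 \<in> I" "deriv f s1 \<noteq> 0" and t0: "t0 \<in> J" "deriv g t0 \<noteq> 0"
      using nonconstant_deriv_nonzero[OF I sf] nonconstant_deriv_nonzero[OF J sg] by blast
    note D = smooth_on_DERIV0[OF sf I(1)] smooth_on_DERIV1[OF sf I(1)]
      smooth_on_DERIV0[OF sg J(1)] smooth_on_DERIV1[OF sg J(1)]
    have f2: "deriv (deriv f) s = 0" if "s \<in> I" for s
      by (rule minimality_forces_f_affine[where f' = "deriv f" and g' = "deriv g" and g'' = "deriv (deriv g)"])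
         (use I J D P t0 that in auto)
    have ?family
      by (rule affine_case_solutions[where f' = "deriv f" and g' = "deriv g" and g'' = "deriv (deriv g)"])
         (use I J sg D P f2 s1 t0 in auto)
    then show ?thesis by blast
  qed blast
next
  assume "?const_f \<or> ?const_g \<or> ?family"
  then show ?P
  proof (elim disjE exE conjE)
    fix y0 assume "\<forall>s\<in>I. f s = y0"
    then have "\<forall>s\<in>I. f s = 0 * s + y0" by simp
    from deriv_affine_on[OF I(1) sf this] show ?P by (simp add: minimality_lhs_def)
  next
    fix z0 assume "\<forall>t\<in>J. g t = z0"
    then have "\<forall>t\<in>J. g t = 0 * t + z0" by simp
    from deriv_affine_on[OF J(1) sg this] show ?P by (simp add: minimality_lhs_def)
  qed (use affine_case_minimal[OF I(1) J(1) sf sg] in blast)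
qed

section \<open>Integration of the profile equation\<close>

lemma I0_deriv: "(I0 has_real_derivative sqrt (cosh u)) (at u)"
proof -
  define a where "a = min 0 u - 1"
  define b where "b = max 0 u + 1"
  have cont: "continuous_on {a..b} (\<lambda>x. sqrt (cosh x))" by (intro continuous_intros)
  have "((\<lambda>v. LBINT y=0..v. sqrt (cosh y)) has_vector_derivative sqrt (cosh u)) (at u within {a..b})"
    using interval_integral_FTC2[OF _ _ cont, of 0 u] unfolding zero_ereal_def[symmetric]
    by (auto simp: a_def b_def)
  moreover have "at u within {a..b} = at u" by (rule at_within_Icc_at) (auto simp: a_def b_def)
  ultimately show ?thesis
    unfolding has_real_derivative_iff_has_vector_derivative I0_def[abs_def] by simp
qed

(* (I0 \<circ> \<zeta>)' = sqrt (cosh \<zeta>) \<zeta>', whose square is the first integral; so the first integral is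
   the constant c^2 iff I0 \<circ> \<zeta> has constant slope c or -c. *)
lemma first_integral_iff_I0:
  fixes \<zeta> :: "real \<Rightarrow> real"
  assumes J: "open J" "is_interval J" and c: "c > 0" and sm: "smooth_on J \<zeta>"
  shows "(\<forall>t\<in>J. (deriv \<zeta> t)^2 * cosh (\<zeta> t) = c^2) \<longleftrightarrow>
         (\<exists>d. (\<forall>t\<in>J. I0 (\<zeta> t) = c * t + d) \<or> (\<forall>t\<in>J. I0 (\<zeta> t) = - c * t + d))"
proof -
  have DI: "((\<lambda>t. I0 (\<zeta> t)) has_real_derivative sqrt (cosh (\<zeta> t)) * deriv \<zeta> t) (at t)" if "t \<in> J" for t
    using DERIV_chain2[OF I0_deriv smooth_on_DERIV0[OF sm J(1) that]] .
  have sq: "(sqrt (cosh (\<zeta> t)) * deriv \<zeta> t)^2 = (deriv \<zeta> t)^2 * cosh (\<zeta> t)" for t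
    by (simp add: power_mult_distrib mult.commute)
  show ?thesis
  proof
    assume h: "\<forall>t\<in>J. (deriv \<zeta> t)^2 * cosh (\<zeta> t) = c^2"
    have "isCont (deriv \<zeta>) t" if "t \<in> J" for t
      using DERIV_isCont[OF smooth_on_DERIV1[OF sm J(1) that]] .
    then have "continuous_on J (deriv \<zeta>)" by (rule continuous_at_imp_continuous_on[OF ballI])
    moreover have "deriv \<zeta> t \<noteq> 0" if "t \<in> J" for t using h that c by fastforce
    ultimately consider "\<forall>t\<in>J. deriv \<zeta> t > 0" | "\<forall>t\<in>J. deriv \<zeta> t < 0"
      using continuous_nonzero_sign[OF J(2)] by blast
    then obtain e where e: "e = c \<or> e = - c" "\<forall>t\<in>J. sqrt (cosh (\<zeta> t)) * deriv \<zeta> t = e"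
    proof cases
      case 1
      have "sqrt (cosh (\<zeta> t)) * deriv \<zeta> t = c" if "t \<in> J" for t
      proof (rule power2_eq_iff_nonneg[THEN iffD1])
        show "0 \<le> sqrt (cosh (\<zeta> t)) * deriv \<zeta> t" using 1 that by (simp add: less_imp_le)
      qed (use c h sq that in auto)
      then show ?thesis using that by blast
    next
      case 2
      have "- (sqrt (cosh (\<zeta> t)) * deriv \<zeta> t) = c" if "t \<in> J" for t
      proof (rule power2_eq_iff_nonneg[THEN iffD1])
        show "0 \<le> - (sqrt (cosh (\<zeta> t)) * deriv \<zeta> t)"
          using 2 that by (simp add: mult_nonneg_nonpos less_imp_le)
      qed (use c h sq that in auto)
      then show ?thesis using that[of "- c"] by force
    qed
    then have "\<exists>d. \<forall>t\<in>J. I0 (\<zeta> t) = e * t + d"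
      using DI by (intro affine_if_const_deriv[OF J(2)]) auto
    then show "\<exists>d. (\<forall>t\<in>J. I0 (\<zeta> t) = c * t + d) \<or> (\<forall>t\<in>J. I0 (\<zeta> t) = - c * t + d)"
      using e(1) by auto
  next
    assume "\<exists>d. (\<forall>t\<in>J. I0 (\<zeta> t) = c * t + d) \<or> (\<forall>t\<in>J. I0 (\<zeta> t) = - c * t + d)"
    then obtain d e where de: "e = c \<or> e = - c" "\<forall>t\<in>J. I0 (\<zeta> t) = e * t + d"
      by (metis mult_minus_left)
    show "\<forall>t\<in>J. (deriv \<zeta> t)^2 * cosh (\<zeta> t) = c^2"
    proof
      fix t assume t: "t \<in> J"
      have "sqrt (cosh (\<zeta> t)) * deriv \<zeta> t = e"
        by (rule DERIV_eq_on_open[OF J(1) t _ _ DI[OF t], of "\<lambda>t. e * t + d"])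
           (use de in \<open>auto intro!: derivative_eq_intros\<close>)
      then show "(deriv \<zeta> t)^2 * cosh (\<zeta> t) = c^2" using de(1) sq[of t] by auto
    qed
  qed
qed

section \<open>Vertical planes\<close>

lemma vertical_plane_eq:
  "translation_surface (\<lambda>s. sol_pt x0' s 0) (\<lambda>t. sol_pt x0'' 0 t) s t = sol_pt (x0' + x0'') s t"
  by (simp add: translation_surface_def sol_mult_def)

(* The plane x = x0 is totally geodesic: the covariant derivatives of its coordinate
   fields (0,1,0) and (0,0,1) are tangent, so H = 0 for both unit normals. *)
lemma vertical_plane_minimal:
  "sol_minimal (translation_surface (\<lambda>s. sol_pt x0' s 0) (\<lambda>t. sol_pt x0'' 0 t)) UNIV"
proof -
  define Y where "Y = translation_surface (\<lambda>s. sol_pt x0' s 0) (\<lambda>t. sol_pt x0'' 0 t)"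
  have Y: "Y = (\<lambda>s t. sol_pt (x0' + x0'') s t)" unfolding Y_def by (simp add: fun_eq_iff vertical_plane_eq)
  have ys: "surf_s Y s t = sol_pt 0 1 0" and yt: "surf_t Y s t = sol_pt 0 0 1" for s t
    unfolding surf_s_def surf_t_def Y
    by (intro vector_derivative_at has_vector_derivative_sol_pt; auto intro!: derivative_eq_intros)+
  have "sol_mean_curv Y N s t = 0" if "sol_unit_normal Y s t N" for s t N
  proof -
    have "N$2 = 0" "N$3 = 0" using that unfolding sol_unit_normal_def ys yt sol_inner_eq by simp_all
    then show ?thesis
      unfolding sol_mean_curv_def Let_def ys yt
      by (simp add: sol_inner_eq sol_cov_eq vector_derivative_const_at)
  qed
  then show ?thesis unfolding sol_minimal_def Y_def by auto
qed

theorem mainTheorem1: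
  fixes I J :: "real set" and f g :: "real \<Rightarrow> real"
  assumes "open I" "is_interval I" "I \<noteq> {}"
      and "open J" "is_interval J" "J \<noteq> {}"
      and "smooth_on I f" "smooth_on J g"
  shows
    "(sol_minimal (translation_surface (\<lambda>s. sol_pt s (f s) 0) (\<lambda>t. sol_pt t 0 (g t))) (I \<times> J)
      \<longleftrightarrow>
        (\<exists>y0. \<forall>s\<in>I. f s = y0)
      \<or> (\<exists>z0. \<forall>t\<in>J. g t = z0)
      \<or> (\<exists>a b m c \<zeta>. a \<noteq> 0 \<and> (\<forall>s\<in>I. f s = a * s + b) \<and> exp (4 * m) = a^2
            \<and> c > 0 \<and> smooth_on J \<zeta> \<and> (\<forall>t\<in>J. (deriv \<zeta> t)^2 * cosh (\<zeta> t) = c^2)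
            \<and> (\<forall>t\<in>J. g t = \<zeta> t / 2 + m)))
   \<and> (\<forall>\<zeta> c. c > 0 \<and> smooth_on J \<zeta> \<longrightarrow>
        ((\<forall>t\<in>J. (deriv \<zeta> t)^2 * cosh (\<zeta> t) = c^2) \<longleftrightarrow>
         (\<exists>d. (\<forall>t\<in>J. I0 (\<zeta> t) = c * t + d) \<or> (\<forall>t\<in>J. I0 (\<zeta> t) = - c * t + d))))
   \<and> (\<forall>x0 x0' x0''. x0' + x0'' = x0 \<longrightarrow>
        (\<forall>s t. translation_surface (\<lambda>s. sol_pt x0' s 0) (\<lambda>t. sol_pt x0'' 0 t) s t = sol_pt x0 s t)
        \<and> sol_minimal (translation_surface (\<lambda>s. sol_pt x0' s 0) (\<lambda>t. sol_pt x0'' 0 t)) UNIV)"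
  (* Part 1 is the classification of solutions of the minimality equation, part 2 the
     integration of the first integral by I0, part 3 the computation for vertical planes. *)
  unfolding translation_surface_typeI typeI_minimal_iff[OF assms(1,4,7,8)]
  apply (rule conjI[OF _ conjI])
  subgoal by (rule minimality_equation_solutions[OF assms(1,2,4,5,7,8)])
  subgoal using first_integral_iff_I0[OF assms(4,5)] by blast
  subgoal using vertical_plane_eq vertical_plane_minimal by blast
  done

end
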